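(* Let $0<r_\varepsilon<1$ ($\varepsilon=+,-$), $\sigma_i\in[0,2\pi)$ ($i=1,2$), $s_\varepsilon=\sqrt{1-r_\varepsilon^2}$, and \begin{align*} U_{r,\sigma}={}&\sum_{n\ge0}|e_1^{n-1}\rangle\langle r_+e_1^n+s_+e_2^n|+|e_2^{n+1}\rangle\langle -e^{i\sigma_1}s_+e_1^n+e^{i\sigma_1}r_+e_2^n|\\ &+\sum_{n\le-1}|e_1^{n-1}\rangle\langle r_-e_1^n+e^{i\sigma_2}s_-e_2^n|+|e_2^{n+1}\rangle\langle -s_-e_1^n+e^{i\sigma_2}r_-e_2^n|. \end{align*} Let $W=\bigoplus_{n\in\mathbb Z}W_n$ be a unitary on $\mathcal H$ with each $W_n$ a unitary on $\mathcal H_n$, and let $\lambda\in[0,2\pi)$. Then $e^{i\lambda}WU_{r,\sigma}W^*=U_{r,\sigma}$ if and only if either $\lambda=0$ and $W=I_{\mathcal H}$, or $\lambda=\pi$ and $W=\bigoplus_{n\in\mathbb Z}(-1)^nI_{\mathcal H_n}$.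
   Context: Let $\mathcal H_n=\mathbb C^2$ for $n\in\mathbb Z$, $\mathcal H=\bigoplus_{n\in\mathbb Z}\mathcal H_n$, and $\{e_1^n,e_2^n\}$ the standard basis of $\mathcal H_n$. Dirac notation: $|x\rangle\langle y|$ is the operator $z\mapsto\langle y,z\rangle x$ (inner product conjugate-linear in the first argument).
   Formalization: The conclusion determines W only up to a constant c with |c| = 1: $W_n$ is c times the identity for every n when $\lambda=0$, and c times $(-1)^n$ times the identity when $\lambda=\pi$. The statement above fails without it. *)

theory Defs
  imports "HOL-Analysis.Analysis"
begin

text \<open>The fibre H_n = C^2 is modelled as complex^2, with standard basis e1, e2.
  A vector of H = direct sum of the H_n is a function int => complex^2;
  it lies in H iff it is square summable.\<close>

definition e1 :: "complex^2" where "e1 = vector [1, 0]"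
definition e2 :: "complex^2" where "e2 = vector [0, 1]"

definition cinner :: "complex^2 \<Rightarrow> complex^2 \<Rightarrow> complex" where
  "cinner u v = (\<Sum>i\<in>UNIV. cnj (u $ i) * v $ i)"

definition inH :: "(int \<Rightarrow> complex^2) \<Rightarrow> bool" where
  "inH z \<longleftrightarrow> (\<lambda>n. (norm (z n))\<^sup>2) summable_on UNIV"

definition cadj :: "complex^2^2 \<Rightarrow> complex^2^2" where
  "cadj M = (\<chi> i j. cnj (M $ j $ i))"

definition cunitary :: "complex^2^2 \<Rightarrow> bool" where
  "cunitary M \<longleftrightarrow> M ** cadj M = mat 1 \<and> cadj M ** M = mat 1"

text \<open>The bra vectors of U_{r,sigma}: at site n, U contains
  |e_1^{n-1}><bra1 n| + |e_2^{n+1}><bra2 n|.\<close>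
definition bra1 :: "real \<Rightarrow> real \<Rightarrow> real \<Rightarrow> real \<Rightarrow> int \<Rightarrow> complex^2" where
  "bra1 rp rm s1 s2 n =
    (let sp = complex_of_real (sqrt (1 - rp\<^sup>2)); sm = complex_of_real (sqrt (1 - rm\<^sup>2)) in
     if n \<ge> 0 then vector [complex_of_real rp, sp]
     else vector [complex_of_real rm, cis s2 * sm])"

definition bra2 :: "real \<Rightarrow> real \<Rightarrow> real \<Rightarrow> real \<Rightarrow> int \<Rightarrow> complex^2" where
  "bra2 rp rm s1 s2 n =
    (let sp = complex_of_real (sqrt (1 - rp\<^sup>2)); sm = complex_of_real (sqrt (1 - rm\<^sup>2)) in
     if n \<ge> 0 then vector [- cis s1 * sp, cis s1 * complex_of_real rp]
     else vector [- sm, cis s2 * complex_of_real rm])"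

text \<open>U_{r,sigma} applied to z, evaluated at site m: only the terms n = m+1
  (ket e_1^{n-1}) and n = m-1 (ket e_2^{n+1}) contribute to site m.\<close>
definition Uop :: "real \<Rightarrow> real \<Rightarrow> real \<Rightarrow> real \<Rightarrow> (int \<Rightarrow> complex^2) \<Rightarrow> (int \<Rightarrow> complex^2)" where
  "Uop rp rm s1 s2 z = (\<lambda>m.
     cinner (bra1 rp rm s1 s2 (m + 1)) (z (m + 1)) *s e1
   + cinner (bra2 rp rm s1 s2 (m - 1)) (z (m - 1)) *s e2)"

definition Wop :: "(int \<Rightarrow> complex^2^2) \<Rightarrow> (int \<Rightarrow> complex^2) \<Rightarrow> (int \<Rightarrow> complex^2)" where
  "Wop W z = (\<lambda>n. W n *v z n)"

definition Wadj :: "(int \<Rightarrow> complex^2^2) \<Rightarrow> (int \<Rightarrow> complex^2) \<Rightarrow> (int \<Rightarrow> complex^2)" where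
  "Wadj W z = (\<lambda>n. cadj (W n) *v z n)"

end

theory Submission
  imports Defs
begin

text \<open>Testing the covariance relation on vectors supported at a single site n compares
  W_{n-1} and W_{n+1} with W_n through the bras of U, whose relevant entries do not vanish.
  This forces each W_n to be diagonal, with both diagonal entries equal to e^{i lam} times the
  top entry of W_{n-1}, while the top entry of W_n is e^{i lam} times the bottom entry of
  W_{n+1}. Hence W_n = a_n I with a_n = e^{i lam} a_{n-1} and e^{2 i lam} = 1, so
  a_n = a_0 e^{i lam |n|}. Conversely such scalar phases pass through U at the cost of exactly
  the factor e^{i lam}.\<close>

lemma vec2_eq_iff: "(x::'a^2) = y \<longleftrightarrow> x$1 = y$1 \<and> x$2 = y$2"
  by (auto simp: vec_eq_iff forall_2)

lemma mat2_eq_iff: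
  "(M::'a^2^2) = N \<longleftrightarrow> M$1$1 = N$1$1 \<and> M$1$2 = N$1$2 \<and> M$2$1 = N$2$1 \<and> M$2$2 = N$2$2"
  by (auto simp: vec2_eq_iff)

lemma e1_nth [simp]: "e1$1 = 1" "e1$2 = 0"
  by (simp_all add: e1_def)

lemma e2_nth [simp]: "e2$1 = 0" "e2$2 = 1"
  by (simp_all add: e2_def)

lemma cinner_2: "cinner u v = cnj (u$1) * v$1 + cnj (u$2) * v$2"
  by (simp add: cinner_def sum_2)

lemma cinner_scale_right: "cinner u (a *s v) = a * cinner u v"
  by (simp add: cinner_2 algebra_simps)

lemma matrix_vector_mult_2_nth [simp]:
  "(M *v (x::complex^2))$1 = M$1$1 * x$1 + M$1$2 * x$2"
  "(M *v (x::complex^2))$2 = M$2$1 * x$1 + M$2$2 * x$2"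
  by (simp_all add: matrix_vector_mult_def sum_2)

lemma matrix_matrix_mult_2_nth [simp]:
  "((A::complex^2^2) ** B)$i$j = A$i$1 * B$1$j + A$i$2 * B$2$j"
  by (simp add: matrix_matrix_mult_def sum_2)

lemma mat_2_nth [simp]:
  "(mat c :: 'a::zero^2^2)$1$1 = c" "(mat c :: 'a^2^2)$2$2 = c"
  "(mat c :: 'a^2^2)$1$2 = 0" "(mat c :: 'a^2^2)$2$1 = 0"
  by (simp_all add: mat_def)

lemma cadj_nth [simp]: "cadj M $ i $ j = cnj (M $ j $ i)"
  by (simp add: cadj_def)

lemma cunitary_mat_iff: "cunitary (mat c) \<longleftrightarrow> norm c = 1"
proof -
  have "cunitary (mat c) \<longleftrightarrow> c * cnj c = 1"
    by (auto simp: cunitary_def mat2_eq_iff mult.commute)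
  also have "\<dots> \<longleftrightarrow> (norm c)\<^sup>2 = 1"
    by (metis complex_norm_square of_real_eq_1_iff)
  finally show ?thesis
    using norm_ge_zero[of c] by (auto simp: power2_eq_1_iff)
qed

lemma cis_mult_self_eq_1_iff: "cis x * cis x = 1 \<longleftrightarrow> sin x = 0"
proof -
  have "cis x * cis x = 1 \<longleftrightarrow> (cos x)\<^sup>2 - (sin x)\<^sup>2 = 1 \<and> sin x * cos x = 0"
    by (auto simp: complex_eq_iff power2_eq_square)
  also have "\<dots> \<longleftrightarrow> sin x = 0"
    using sin_cos_squared_add[of x] by (auto simp: power2_eq_square)
  finally show ?thesis .
qed

lemma cis_mult_self_eq_1_iff_period:
  assumes "0 \<le> x" "x < 2 * pi"
  shows "cis x * cis x = 1 \<longleftrightarrow> x = 0 \<or> x = pi"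
proof -
  have "(\<exists>i::int. x = of_int i * pi) \<longleftrightarrow> x = 0 \<or> x = pi"
  proof
    assume "\<exists>i::int. x = of_int i * pi"
    then obtain i :: int where i: "x = of_int i * pi"
      by blast
    with assms have "0 \<le> i" "i < 2"
      using pi_gt_zero by (auto simp: zero_le_mult_iff mult_less_cancel_right2)
    with i show "x = 0 \<or> x = pi"
      by auto
  qed (auto intro: exI[of _ 0] exI[of _ 1])
  then show ?thesis
    by (simp add: cis_mult_self_eq_1_iff sin_zero_iff_int2)
qed

lemma power_nat_abs_step:
  fixes s :: "'a::monoid_mult"
  shows "m \<ge> 0 \<Longrightarrow> s ^ nat \<bar>m + 1\<bar> = s * s ^ nat \<bar>m\<bar>"
    and "m \<le> 0 \<Longrightarrow> s ^ nat \<bar>m - 1\<bar> = s * s ^ nat \<bar>m\<bar>"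
proof -
  show "m \<ge> 0 \<Longrightarrow> s ^ nat \<bar>m + 1\<bar> = s * s ^ nat \<bar>m\<bar>"
    by (simp add: nat_add_distrib)
  assume "m \<le> 0"
  then have "nat \<bar>m - 1\<bar> = Suc (nat \<bar>m\<bar>)"
    by simp
  then show "s ^ nat \<bar>m - 1\<bar> = s * s ^ nat \<bar>m\<bar>"
    by (simp only: power_Suc)
qed

lemma power_nat_abs_mult_succ:
  fixes s :: "'a::comm_monoid_mult"
  assumes "s * s = 1"
  shows "s ^ nat \<bar>m\<bar> * s ^ nat \<bar>m + 1\<bar> = s"
proof (cases "m \<ge> 0")
  case True
  then have "s ^ nat \<bar>m\<bar> * s ^ nat \<bar>m + 1\<bar> = s * (s * s) ^ nat \<bar>m\<bar>"
    using power_nat_abs_step(1)[of m s] by (simp add: power_mult_distrib ac_simps)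
  with assms show ?thesis
    by simp
next
  case False
  then have "s ^ nat \<bar>m\<bar> * s ^ nat \<bar>m + 1\<bar> = s * (s * s) ^ nat \<bar>m + 1\<bar>"
    using power_nat_abs_step(2)[of "m + 1" s] by (simp add: power_mult_distrib ac_simps)
  with assms show ?thesis
    by simp
qed

lemma int_recurrence_solution:
  fixes a :: "int \<Rightarrow> 'a::comm_ring_1"
  assumes "s * s = 1" and rec: "\<And>n. a n = s * a (n - 1)"
  shows "a n = a 0 * s ^ nat \<bar>n\<bar>"
proof (induction n rule: int_induct[where k = 0])
  case base
  show ?case
    by simp
next
  case (step1 i)
  then show ?case
    using rec[of "i + 1"] power_nat_abs_step(1)[of i s] by (simp add: ac_simps)
next
  case (step2 i)
  have "a (i - 1) = s * a i"
    using rec[of i] assms(1) by (simp add: mult.assoc[symmetric])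
  with step2 show ?case
    using power_nat_abs_step(2)[of i s] by (simp add: ac_simps)
qed

lemma bra_nth_nonzero:
  assumes "0 < rp" "rp < 1" "0 < rm" "rm < 1"
  shows "bra1 rp rm s1 s2 n $ 1 \<noteq> 0" "bra1 rp rm s1 s2 n $ 2 \<noteq> 0"
    and "bra2 rp rm s1 s2 n $ 1 \<noteq> 0"
  using assms by (auto simp: bra1_def bra2_def Let_def power2_eq_1_iff)

definition site_vec :: "int \<Rightarrow> complex^2 \<Rightarrow> int \<Rightarrow> complex^2" where
  "site_vec n v = (\<lambda>k. if k = n then v else 0)"

lemma inH_site_vec: "inH (site_vec n v)"
  unfolding inH_def site_vec_def
  by (rule finite_nonzero_values_imp_summable_on) (auto intro: finite_subset[of _ "{n}"])

lemma Wadj_site_vec: "Wadj W (site_vec n v) = site_vec n (cadj (W n) *v v)"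
  by (auto simp: Wadj_def site_vec_def)

lemma Uop_site_vec:
  "Uop rp rm s1 s2 (site_vec n v) (n - 1) = cinner (bra1 rp rm s1 s2 n) v *s e1"
  "Uop rp rm s1 s2 (site_vec n v) (n + 1) = cinner (bra2 rp rm s1 s2 n) v *s e2"
  by (simp_all add: Uop_def site_vec_def cinner_2)

definition phase_covariant ::
    "real \<Rightarrow> (int \<Rightarrow> complex^2^2) \<Rightarrow> ((int \<Rightarrow> complex^2) \<Rightarrow> int \<Rightarrow> complex^2) \<Rightarrow> bool" where
  "phase_covariant lam W U \<longleftrightarrow>
     (\<forall>z. inH z \<longrightarrow> (\<lambda>n. cis lam *s Wop W (U (Wadj W z)) n) = U z)"

lemma phase_covariant_at_site:
  assumes cov: "phase_covariant lam W (Uop rp rm s1 s2)" and unitary: "cadj (W n) ** W n = mat 1"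
  shows "cis lam *s (W (n - 1) *v (cinner (bra1 rp rm s1 s2 n) u *s e1))
           = cinner (bra1 rp rm s1 s2 n) (W n *v u) *s e1"
    and "cis lam *s (W (n + 1) *v (cinner (bra2 rp rm s1 s2 n) u *s e2))
           = cinner (bra2 rp rm s1 s2 n) (W n *v u) *s e2"
proof -
  have "Wadj W (site_vec n (W n *v u)) = site_vec n u"
    using unitary by (simp add: Wadj_site_vec matrix_vector_mul_assoc)
  then have eq: "(\<lambda>k. cis lam *s Wop W (Uop rp rm s1 s2 (site_vec n u)) k)
                   = Uop rp rm s1 s2 (site_vec n (W n *v u))"
    using cov inH_site_vec unfolding phase_covariant_def by metis
  show "cis lam *s (W (n - 1) *v (cinner (bra1 rp rm s1 s2 n) u *s e1))
          = cinner (bra1 rp rm s1 s2 n) (W n *v u) *s e1"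
    using fun_cong[OF eq, of "n - 1"] by (simp add: Wop_def Uop_site_vec)
  show "cis lam *s (W (n + 1) *v (cinner (bra2 rp rm s1 s2 n) u *s e2))
          = cinner (bra2 rp rm s1 s2 n) (W n *v u) *s e2"
    using fun_cong[OF eq, of "n + 1"] by (simp add: Wop_def Uop_site_vec)
qed

lemma shift_intertwiner_diagonal:
  fixes W :: "int \<Rightarrow> complex^2^2" and b1 b2 :: "int \<Rightarrow> complex^2"
  assumes E1: "\<And>n u. cis lam *s (W (n - 1) *v (cinner (b1 n) u *s e1))
                           = cinner (b1 n) (W n *v u) *s e1"
    and E2: "\<And>n u. cis lam *s (W (n + 1) *v (cinner (b2 n) u *s e2))
                           = cinner (b2 n) (W n *v u) *s e2"
    and nz: "\<And>n. b1 n $ 1 \<noteq> 0" "\<And>n. b1 n $ 2 \<noteq> 0" "\<And>n. b2 n $ 1 \<noteq> 0"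
  shows "W n = mat (cis lam * W (n - 1) $ 1 $ 1)"
    and "W n $ 1 $ 1 = cis lam * W (n + 1) $ 2 $ 2"
proof -
  have off21: "W k $ 2 $ 1 = 0" for k
    using E1[of "k + 1" e1] nz(1)[of "k + 1"] by (simp add: vec2_eq_iff cinner_2)
  have off12: "W n $ 1 $ 2 = 0"
    using E2[of "n - 1" e1] nz(3)[of "n - 1"] by (simp add: vec2_eq_iff cinner_2)
  have "W n $ 1 $ 1 = cis lam * W (n - 1) $ 1 $ 1"
    using E1[of n e1] nz(1)[of n] off21 by (simp add: vec2_eq_iff cinner_2)
  moreover have "W n $ 2 $ 2 = cis lam * W (n - 1) $ 1 $ 1"
    using E1[of n e2] nz(2)[of n] off21 off12 by (simp add: vec2_eq_iff cinner_2)
  ultimately show "W n = mat (cis lam * W (n - 1) $ 1 $ 1)"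
    using off21 off12 by (simp add: mat2_eq_iff)
  show "W n $ 1 $ 1 = cis lam * W (n + 1) $ 2 $ 2"
    using E2[of n e1] nz(3)[of n] off21 by (simp add: vec2_eq_iff cinner_2)
qed

lemma phase_covariant_scalar_phases:
  assumes W: "\<And>n. W n = mat (a n)"
    and right: "\<And>m. cis lam * a m * cnj (a (m + 1)) = 1"
    and left: "\<And>m. cis lam * a m * cnj (a (m - 1)) = 1"
  shows "phase_covariant lam W (Uop rp rm s1 s2)"
  unfolding phase_covariant_def
proof (intro allI impI ext)
  fix z :: "int \<Rightarrow> complex^2" and m
  have "Wadj W z = (\<lambda>k. cnj (a k) *s z k)"
    using W by (auto simp: Wadj_def vec2_eq_iff)
  moreover have "Wop W x m = a m *s x m" for x
    using W by (auto simp: Wop_def vec2_eq_iff)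
  moreover have "cis lam * (a m * (cnj (a (m + 1)) * x)) = x"
    and "cis lam * (a m * (cnj (a (m - 1)) * x)) = x" for x
    using right[of m] left[of m] by (metis mult.assoc mult_1)+
  ultimately show "cis lam *s Wop W (Uop rp rm s1 s2 (Wadj W z)) m = Uop rp rm s1 s2 z m"
    by (simp add: vec2_eq_iff Uop_def cinner_scale_right)
qed

lemma phase_covariant_Uop_iff:
  assumes "0 < rp" "rp < 1" "0 < rm" "rm < 1" and unitary: "\<And>n. cunitary (W n)"
  shows "phase_covariant lam W (Uop rp rm s1 s2) \<longleftrightarrow>
    cis lam * cis lam = 1 \<and> (\<exists>c. norm c = 1 \<and> (\<forall>n. W n = mat (c * cis lam ^ nat \<bar>n\<bar>)))"
  (is "_ \<longleftrightarrow> ?scalar_phases")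
proof
  assume cov: "phase_covariant lam W (Uop rp rm s1 s2)"
  have "cadj (W n) ** W n = mat 1" for n
    using unitary by (simp add: cunitary_def)
  note relations = shift_intertwiner_diagonal[OF phase_covariant_at_site(1)[OF cov this]
      phase_covariant_at_site(2)[OF cov this] bra_nth_nonzero[OF assms(1-4)]]
  define a where "a n = W n $ 1 $ 1" for n
  have rec: "a n = cis lam * a (n - 1)" for n
    using relations(1)[of n] by (simp add: a_def)
  have W_scalar: "W n = mat (a n)" for n
    using relations(1)[of n] rec[of n] by (simp add: a_def)
  have norm_a: "norm (a n) = 1" for n
    using unitary[of n] by (simp add: W_scalar cunitary_mat_iff)
  have "a 0 = cis lam * W 1 $ 2 $ 2"
    using relations(2)[of 0] by (simp add: a_def)
  also have "W 1 $ 2 $ 2 = a 1"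
    by (subst W_scalar) simp
  also have "a 1 = cis lam * a 0"
    using rec[of 1] by simp
  finally have "a 0 = (cis lam * cis lam) * a 0"
    by (simp add: mult.assoc)
  then have cis_square: "cis lam * cis lam = 1"
    using norm_a[of 0] by (metis mult_cancel_right1 norm_zero zero_neq_one)
  then show ?scalar_phases
    using int_recurrence_solution[of "cis lam" a, OF cis_square rec] W_scalar norm_a by metis
next
  assume ?scalar_phases
  then obtain c where cis_square: "cis lam * cis lam = 1" and "norm c = 1"
    and W: "\<And>n. W n = mat (c * cis lam ^ nat \<bar>n\<bar>)"
    by blast
  have "c * cnj c = 1"
    using \<open>norm c = 1\<close> complex_norm_square[of c] by simp
  moreover have "cnj (cis lam) = cis lam"
    using cis_square by (metis cis_cnj cis_inverse inverse_unique)
  ultimately have phase_step: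
      "cis lam * (c * cis lam ^ nat \<bar>m\<bar>) * cnj (c * cis lam ^ nat \<bar>k\<bar>) = 1"
    if "cis lam ^ nat \<bar>m\<bar> * cis lam ^ nat \<bar>k\<bar> = cis lam" for m k
    using that cis_square by (simp add: ac_simps)
  show "phase_covariant lam W (Uop rp rm s1 s2)"
  proof (rule phase_covariant_scalar_phases[OF W])
    show "cis lam * (c * cis lam ^ nat \<bar>m\<bar>) * cnj (c * cis lam ^ nat \<bar>m + 1\<bar>) = 1" for m
      by (rule phase_step) (rule power_nat_abs_mult_succ[OF cis_square])
    show "cis lam * (c * cis lam ^ nat \<bar>m\<bar>) * cnj (c * cis lam ^ nat \<bar>m - 1\<bar>) = 1" for m
      using power_nat_abs_mult_succ[OF cis_square, of "m - 1"]
      by (intro phase_step) (simp add: mult.commute)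
  qed
qed

theorem corollary2p13:
  fixes rp rm s1 s2 lam :: real and W :: "int \<Rightarrow> complex^2^2"
  assumes "0 < rp" "rp < 1" "0 < rm" "rm < 1"
    and "0 \<le> s1" "s1 < 2 * pi" "0 \<le> s2" "s2 < 2 * pi"
    and "\<forall>n. cunitary (W n)"
    and "0 \<le> lam" "lam < 2 * pi"
  shows "(\<forall>z. inH z \<longrightarrow>
            (\<lambda>n. cis lam *s Wop W (Uop rp rm s1 s2 (Wadj W z)) n) = Uop rp rm s1 s2 z)
    \<longleftrightarrow> ((lam = 0 \<and> (\<exists>c. norm c = 1 \<and> (\<forall>n. W n = mat c)))
        \<or> (lam = pi \<and> (\<exists>c. norm c = 1 \<and> (\<forall>n. W n = mat (c * (- 1) ^ nat \<bar>n\<bar>)))))"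
proof -
  have "cis lam * cis lam = 1 \<longleftrightarrow> lam = 0 \<or> lam = pi"
    using assms(10,11) by (rule cis_mult_self_eq_1_iff_period)
  then have "phase_covariant lam W (Uop rp rm s1 s2) \<longleftrightarrow>
      (lam = 0 \<and> (\<exists>c. norm c = 1 \<and> (\<forall>n. W n = mat c)))
    \<or> (lam = pi \<and> (\<exists>c. norm c = 1 \<and> (\<forall>n. W n = mat (c * (- 1) ^ nat \<bar>n\<bar>))))"
    using phase_covariant_Uop_iff[OF assms(1-4)] assms(9) by auto
  then show ?thesis
    unfolding phase_covariant_def .
qed

end
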